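(* Let $A$ be a noetherian ring, complete with respect to an ideal $I$, and let $f\in A$ be a non-zero divisor, defining the principal Cartier divisor $\mathcal{Z}=V(f)\subseteq\mathcal{U}:=\operatorname{Spf}A$. For $m\ge0$ set $U_m:=\operatorname{Spec}A/I^m$. Let $k\ge1$ be such that $I^{m+k}\cap(f)=I^m\,(I^k\cap(f))$ for all $m\ge0$. Then: (1) For every $m\ge1$ and every $h\in A$ with $(h)+I^{m+k}=(f)+I^{m+k}$, there is a unit $t\in A^\times$ with $h-tf\in I^{m+k}$; in particular $tf$ is a generator of $(f)$ lifting $h$ modulo $I^{m+k}$. Consequently, any two such elements $h,h'$ satisfy $h'\equiv vh\pmod{I^{m+k}}$ for some unit $v\in A^\times$. (2) If $g\in A$ is a non-zero divisor with $(g)+I^{k+1}=(f)+I^{k+1}$, then $I^{m+k}\cap(g)=I^m\,(I^k\cap(g))$ for all $m\ge0$. (3) Every Cartier divisor $\mathcal{Z}'\subseteq\mathcal{U}$ with $\mathcal{Z}'\cap U_{k+1}=\mathcal{Z}\cap U_{k+1}$ is principal, i.e. of the form $V(g)$ for a non-zero divisor $g\in A$.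
   Context: A Cartier divisor in $\mathcal{U}=\operatorname{Spf}A$ is a closed formal subscheme which, on the members of some open covering of $\mathcal{U}$ by affine formal schemes $\operatorname{Spf}A_i$, is defined by a single non-zero divisor of $A_i$. Such $k$ exists by the Artin–Rees lemma. *)

theory Defs
  imports Main
begin

definition is_ideal :: "'a::comm_ring_1 set \<Rightarrow> bool" where
  "is_ideal J \<longleftrightarrow> 0 \<in> J \<and> (\<forall>x\<in>J. \<forall>y\<in>J. x + y \<in> J) \<and> (\<forall>a. \<forall>x\<in>J. a * x \<in> J)"

definition principal_ideal :: "'a::comm_ring_1 \<Rightarrow> 'a set" where
  "principal_ideal f = {a * f | a. True}"

definition ideal_sum :: "'a::comm_ring_1 set \<Rightarrow> 'a set \<Rightarrow> 'a set" where
  "ideal_sum I J = {x + y | x y. x \<in> I \<and> y \<in> J}"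

definition ideal_prod :: "'a::comm_ring_1 set \<Rightarrow> 'a set \<Rightarrow> 'a set" where
  "ideal_prod I J = {x. \<exists>(n::nat) a b. (\<forall>i<n. a i \<in> I \<and> b i \<in> J) \<and> x = (\<Sum>i<n. a i * b i)}"

fun ideal_pow :: "'a::comm_ring_1 set \<Rightarrow> nat \<Rightarrow> 'a set" where
  "ideal_pow I 0 = UNIV"
| "ideal_pow I (Suc n) = ideal_prod I (ideal_pow I n)"

definition ideal_gen :: "'a::comm_ring_1 set \<Rightarrow> 'a set" where
  "ideal_gen S = {x. \<exists>(n::nat) c s. (\<forall>i<n. s i \<in> S) \<and> x = (\<Sum>i<n. c i * s i)}"

definition non_zero_divisor :: "'a::comm_ring_1 \<Rightarrow> bool" where
  "non_zero_divisor f \<longleftrightarrow> (\<forall>a. a * f = 0 \<longrightarrow> a = 0)"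

definition unit_elem :: "'a::comm_ring_1 \<Rightarrow> bool" where
  "unit_elem t \<longleftrightarrow> (\<exists>u. t * u = 1)"

definition noetherian_ring :: "'a::comm_ring_1 itself \<Rightarrow> bool" where
  "noetherian_ring _ \<longleftrightarrow> (\<forall>J::'a set. is_ideal J \<longrightarrow> (\<exists>S. finite S \<and> J = ideal_gen S))"

text \<open>A is complete (and separated) with respect to the I-adic topology.\<close>
definition adically_complete :: "'a::comm_ring_1 set \<Rightarrow> bool" where
  "adically_complete I \<longleftrightarrow>
     (\<forall>x. (\<forall>n. x \<in> ideal_pow I n) \<longrightarrow> x = 0) \<and>
     (\<forall>x::nat \<Rightarrow> 'a. (\<forall>n. x (Suc n) - x n \<in> ideal_pow I n) \<longrightarrow>
        (\<exists>y. \<forall>n. y - x n \<in> ideal_pow I n))"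

section \<open>The completed localisation A_{s} = lim_n (A/I^n)_s\<close>

text \<open>An element of (A/I^n)_s is represented by a pair (a, j), meaning a / s^j.
  Two representatives are equal in (A/I^n)_s iff s^r (s^l a - s^j b) \<in> I^n for some r.\<close>

definition loc_eq :: "'a::comm_ring_1 set \<Rightarrow> 'a \<Rightarrow> nat \<Rightarrow> 'a \<times> nat \<Rightarrow> 'a \<times> nat \<Rightarrow> bool" where
  "loc_eq I s n p q \<longleftrightarrow>
     (\<exists>r. s ^ r * (s ^ snd q * fst p - s ^ snd p * fst q) \<in> ideal_pow I n)"

definition loc_add :: "'a::comm_ring_1 \<Rightarrow> 'a \<times> nat \<Rightarrow> 'a \<times> nat \<Rightarrow> 'a \<times> nat" where
  "loc_add s p q = (s ^ snd q * fst p + s ^ snd p * fst q, snd p + snd q)"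

definition loc_mul :: "'a::comm_ring_1 \<times> nat \<Rightarrow> 'a \<times> nat \<Rightarrow> 'a \<times> nat" where
  "loc_mul p q = (fst p * fst q, snd p + snd q)"

text \<open>Elements of A_{s}: compatible sequences (x_n)_n, x_n \<in> (A/I^n)_s.\<close>
definition cl_elem :: "'a::comm_ring_1 set \<Rightarrow> 'a \<Rightarrow> (nat \<Rightarrow> 'a \<times> nat) \<Rightarrow> bool" where
  "cl_elem I s x \<longleftrightarrow> (\<forall>n. loc_eq I s n (x (Suc n)) (x n))"

definition cl_eq :: "'a::comm_ring_1 set \<Rightarrow> 'a \<Rightarrow> (nat \<Rightarrow> 'a \<times> nat) \<Rightarrow> (nat \<Rightarrow> 'a \<times> nat) \<Rightarrow> bool" where
  "cl_eq I s x y \<longleftrightarrow> (\<forall>n. loc_eq I s n (x n) (y n))"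

definition cl_add :: "'a::comm_ring_1 \<Rightarrow> (nat \<Rightarrow> 'a \<times> nat) \<Rightarrow> (nat \<Rightarrow> 'a \<times> nat) \<Rightarrow> nat \<Rightarrow> 'a \<times> nat" where
  "cl_add s x y = (\<lambda>n. loc_add s (x n) (y n))"

definition cl_mul :: "(nat \<Rightarrow> 'a::comm_ring_1 \<times> nat) \<Rightarrow> (nat \<Rightarrow> 'a \<times> nat) \<Rightarrow> nat \<Rightarrow> 'a \<times> nat" where
  "cl_mul x y = (\<lambda>n. loc_mul (x n) (y n))"

definition cl_zero :: "nat \<Rightarrow> 'a::comm_ring_1 \<times> nat" where
  "cl_zero = (\<lambda>n. (0, 0))"

definition cl_of :: "'a::comm_ring_1 \<Rightarrow> nat \<Rightarrow> 'a \<times> nat" where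
  "cl_of a = (\<lambda>n. (a, 0))"

definition cl_nzd :: "'a::comm_ring_1 set \<Rightarrow> 'a \<Rightarrow> (nat \<Rightarrow> 'a \<times> nat) \<Rightarrow> bool" where
  "cl_nzd I s x \<longleftrightarrow> (\<forall>y. cl_elem I s y \<longrightarrow> cl_eq I s (cl_mul y x) cl_zero \<longrightarrow> cl_eq I s y cl_zero)"

definition locally_principal_nzd :: "'a::comm_ring_1 set \<Rightarrow> 'a \<Rightarrow> 'a set \<Rightarrow> bool" where
  "locally_principal_nzd I s J \<longleftrightarrow>
     (\<exists>\<phi>. cl_elem I s \<phi> \<and> cl_nzd I s \<phi> \<and>
        (\<forall>j\<in>J. \<exists>c. cl_elem I s c \<and> cl_eq I s (cl_of j) (cl_mul c \<phi>)) \<and>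
        (\<exists>m c js. (\<forall>i<m. cl_elem I s (c i) \<and> js i \<in> J) \<and>
           cl_eq I s \<phi> (foldr (cl_add s) (map (\<lambda>i. cl_mul (c i) (cl_of (js i))) [0..<m]) cl_zero)))"

text \<open>Cartier divisor in Spf A, given by its ideal J \<subseteq> A (closed formal subschemes of
  Spf A, A noetherian I-adically complete, correspond to ideals of A): there are
  s_1,...,s_m with D(s_i) covering Spf A (i.e. (s_1,...,s_m) + I = A) such that J is
  generated on each Spf A_{s_i} by a non-zero divisor of A_{s_i}.\<close>
definition cartier_divisor :: "'a::comm_ring_1 set \<Rightarrow> 'a set \<Rightarrow> bool" where
  "cartier_divisor I J \<longleftrightarrow> is_ideal J \<and>
     (\<exists>S. finite S \<and> ideal_sum (ideal_gen S) I = UNIV \<and>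
        (\<forall>s\<in>S. locally_principal_nzd I s J))"

end

theory Submission
  imports Defs
begin

text \<open>
  For a non-zero divisor f, the Artin-Rees condition says that the I-adic order of
  x f exceeds that of x by at most k. This cancellation property survives replacing f by
  any g \<equiv> f mod I^{k+1}, and it drives all three parts.
  (1) If (h) + I^{m+k} = (f) + I^{m+k}, write h \<equiv> a f and f \<equiv> b h; then
  (1 - b a) f \<in> I^{m+k}, so 1 - b a \<in> I and a is a unit by completeness.
  (2) The Artin-Rees condition transfers from f to g by the same cancellation.
  (3) For a Cartier divisor J pick g \<in> J with g \<equiv> f mod I^{k+1}. On a chart D(s),
  J is generated by one element up to powers of s; comparing it with g shows that
  s^\<rho> j \<in> (g) + I^n for every j \<in> J. The s and I generate the unit ideal, so
  J \<subseteq> (g) + I^n for all n, and by completeness and cancellation (g) is I-adically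
  closed. Hence J = (g).
\<close>

section \<open>Ideals\<close>

lemma ideal_zero: "is_ideal J \<Longrightarrow> 0 \<in> J"
  unfolding is_ideal_def by blast

lemma ideal_add: "is_ideal J \<Longrightarrow> x \<in> J \<Longrightarrow> y \<in> J \<Longrightarrow> x + y \<in> J"
  unfolding is_ideal_def by blast

lemma ideal_mult_left: "is_ideal J \<Longrightarrow> x \<in> J \<Longrightarrow> a * x \<in> J"
  unfolding is_ideal_def by blast

lemma ideal_mult_right: "is_ideal J \<Longrightarrow> x \<in> J \<Longrightarrow> x * a \<in> J"
  using ideal_mult_left[of J x a] by (simp add: mult.commute)

lemma ideal_diff: "is_ideal J \<Longrightarrow> x \<in> J \<Longrightarrow> y \<in> J \<Longrightarrow> x - y \<in> J"
  using ideal_add[of J x "(-1) * y"] ideal_mult_left[of J y "-1"] by simp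

lemma sum_mem_ideal:
  assumes "is_ideal J" "\<And>i. i \<in> A \<Longrightarrow> f i \<in> J"
  shows "sum f A \<in> J"
  using assms(2)
  by (induction A rule: infinite_finite_induct) (auto intro: ideal_zero ideal_add assms(1))

lemma is_ideal_UNIV: "is_ideal UNIV"
  unfolding is_ideal_def by blast

lemma is_ideal_Int: "is_ideal A \<Longrightarrow> is_ideal B \<Longrightarrow> is_ideal (A \<inter> B)"
  unfolding is_ideal_def by blast

lemma is_ideal_colon: "is_ideal L \<Longrightarrow> is_ideal {x. x * j \<in> L}"
  unfolding is_ideal_def by (simp add: distrib_right mult.assoc)

lemma is_ideal_radical:
  assumes K: "is_ideal K"
  shows "is_ideal {x. \<exists>e. x ^ e \<in> K}"
  unfolding is_ideal_def
proof (intro conjI ballI allI)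
  show "0 \<in> {x. \<exists>e. x ^ e \<in> K}"
    using ideal_zero[OF K] by (auto intro: exI[of _ 1])
next
  fix x y assume "x \<in> {x. \<exists>e. x ^ e \<in> K}" "y \<in> {x. \<exists>e. x ^ e \<in> K}"
  then obtain a b where a: "x ^ a \<in> K" and b: "y ^ b \<in> K" by blast
  \<comment> \<open>every term of the binomial expansion of (x + y)^(a+b) contains x^a or y^b\<close>
  have "x ^ i * y ^ (a + b - i) \<in> K" for i
  proof (cases "a \<le> i")
    case True
    then have "x ^ i * y ^ (a + b - i) = x ^ a * (x ^ (i - a) * y ^ (a + b - i))"
      by (metis le_add_diff_inverse mult.assoc power_add)
    then show ?thesis using ideal_mult_right[OF K a] by simp
  next
    case False
    then have "a + b - i = b + (a - i)" by simp
    then have "x ^ i * y ^ (a + b - i) = y ^ b * (x ^ i * y ^ (a - i))"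
      by (simp add: ac_simps power_add)
    then show ?thesis using ideal_mult_right[OF K b] by simp
  qed
  then have "(x + y) ^ (a + b) \<in> K"
    unfolding binomial_ring by (auto intro!: sum_mem_ideal[OF K] simp: mult.assoc ideal_mult_left[OF K])
  then show "x + y \<in> {x. \<exists>e. x ^ e \<in> K}" by blast
next
  fix c x assume "x \<in> {x. \<exists>e. x ^ e \<in> K}"
  then obtain a where "x ^ a \<in> K" by blast
  then have "(c * x) ^ a \<in> K" using ideal_mult_left[OF K] by (simp add: power_mult_distrib)
  then show "c * x \<in> {x. \<exists>e. x ^ e \<in> K}" by blast
qed

lemma ideal_gen_subset:
  assumes "is_ideal R" "S \<subseteq> R"
  shows "ideal_gen S \<subseteq> R"
  using assms unfolding ideal_gen_def by (auto intro!: sum_mem_ideal ideal_mult_left)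

lemma is_ideal_principal_ideal: "is_ideal (principal_ideal f)"
  unfolding is_ideal_def principal_ideal_def
proof (intro conjI ballI allI)
  show "0 \<in> {a * f |a. True}" by (auto intro: exI[of _ 0])
next
  fix x y assume "x \<in> {a * f |a. True}" "y \<in> {a * f |a. True}"
  then obtain a b where "x = a * f" "y = b * f" by blast
  then have "x + y = (a + b) * f" by (simp add: distrib_right)
  then show "x + y \<in> {a * f |a. True}" by blast
next
  fix c x assume "x \<in> {a * f |a. True}"
  then obtain a where "x = a * f" by blast
  then have "c * x = (c * a) * f" by (simp add: mult.assoc)
  then show "c * x \<in> {a * f |a. True}" by blast
qed

lemma principal_idealI: "c * f \<in> principal_ideal f"
  unfolding principal_ideal_def by blast

lemma principal_idealE: "x \<in> principal_ideal f \<Longrightarrow> (\<And>c. x = c * f \<Longrightarrow> P) \<Longrightarrow> P"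
  unfolding principal_ideal_def by blast

lemma principal_ideal_subset: "is_ideal J \<Longrightarrow> f \<in> J \<Longrightarrow> principal_ideal f \<subseteq> J"
  by (auto elim: principal_idealE intro: ideal_mult_left)

lemma ideal_sumI: "a \<in> A \<Longrightarrow> b \<in> B \<Longrightarrow> a + b \<in> ideal_sum A B"
  unfolding ideal_sum_def by blast

lemma ideal_sumE: "x \<in> ideal_sum A B \<Longrightarrow> (\<And>a b. x = a + b \<Longrightarrow> a \<in> A \<Longrightarrow> b \<in> B \<Longrightarrow> P) \<Longrightarrow> P"
  unfolding ideal_sum_def by blast

lemma ideal_sum_mono: "B \<subseteq> B' \<Longrightarrow> ideal_sum A B \<subseteq> ideal_sum A B'"
  unfolding ideal_sum_def by blast

lemma ideal_sum_subset:
  "is_ideal R \<Longrightarrow> A \<subseteq> R \<Longrightarrow> B \<subseteq> R \<Longrightarrow> ideal_sum A B \<subseteq> R"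
  unfolding ideal_sum_def by (auto intro: ideal_add)

lemma is_ideal_ideal_sum:
  assumes A: "is_ideal A" and B: "is_ideal B"
  shows "is_ideal (ideal_sum A B)"
  unfolding is_ideal_def
proof (intro conjI ballI allI)
  show "0 \<in> ideal_sum A B" using ideal_sumI[OF ideal_zero[OF A] ideal_zero[OF B]] by simp
next
  fix x y assume x: "x \<in> ideal_sum A B" and y: "y \<in> ideal_sum A B"
  obtain a b where ab: "x = a + b" "a \<in> A" "b \<in> B" using x by (rule ideal_sumE)
  obtain a' b' where ab': "y = a' + b'" "a' \<in> A" "b' \<in> B" using y by (rule ideal_sumE)
  have "x + y = (a + a') + (b + b')" using ab ab' by (simp add: ac_simps)
  then show "x + y \<in> ideal_sum A B"
    using ideal_sumI[OF ideal_add[OF A ab(2) ab'(2)] ideal_add[OF B ab(3) ab'(3)]] by simp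
next
  fix c x assume "x \<in> ideal_sum A B"
  then obtain a b where ab: "x = a + b" "a \<in> A" "b \<in> B" by (rule ideal_sumE)
  then show "c * x \<in> ideal_sum A B"
    using ideal_sumI[OF ideal_mult_left[OF A ab(2)] ideal_mult_left[OF B ab(3)]]
    by (simp add: distrib_left)
qed

lemma mem_ideal_sum_principal_iff:
  assumes "is_ideal L"
  shows "x \<in> ideal_sum (principal_ideal f) L \<longleftrightarrow> (\<exists>c. x - c * f \<in> L)"
proof
  assume "x \<in> ideal_sum (principal_ideal f) L"
  then obtain c b where "x = c * f + b" "b \<in> L" by (auto elim!: ideal_sumE principal_idealE)
  then show "\<exists>c. x - c * f \<in> L" by (intro exI[of _ c]) simp
next
  assume "\<exists>c. x - c * f \<in> L"
  then obtain c where c: "x - c * f \<in> L" by blast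
  show "x \<in> ideal_sum (principal_ideal f) L"
    using ideal_sumI[OF principal_idealI[of c f] c] by simp
qed

lemma self_mem_ideal_sum_principal: "is_ideal L \<Longrightarrow> f \<in> ideal_sum (principal_ideal f) L"
  using mem_ideal_sum_principal_iff[of L f f] ideal_zero[of L] by (metis diff_self mult_1)

lemma ideal_prodE:
  assumes "x \<in> ideal_prod A B"
  obtains n :: nat and a b where "\<forall>i<n. a i \<in> A \<and> b i \<in> B" "x = (\<Sum>i<n. a i * b i)"
  using assms unfolding ideal_prod_def by blast

lemma ideal_prodI:
  fixes n :: nat
  assumes "\<And>i. i < n \<Longrightarrow> a i \<in> A" "\<And>i. i < n \<Longrightarrow> b i \<in> B"
  shows "(\<Sum>i<n. a i * b i) \<in> ideal_prod A B"
  unfolding ideal_prod_def mem_Collect_eq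
  by (rule exI[where x=n], rule exI[where x=a], rule exI[where x=b]) (simp add: assms)

lemma ideal_prod_zero: "0 \<in> ideal_prod A B"
  unfolding ideal_prod_def by (auto intro: exI[of _ 0])

lemma ideal_prod_add_mult:
  assumes x: "x \<in> ideal_prod A B" and "a \<in> A" "b \<in> B"
  shows "x + a * b \<in> ideal_prod A B"
proof -
  obtain n :: nat and a' b' where ab': "\<forall>i<n. a' i \<in> A \<and> b' i \<in> B" "x = (\<Sum>i<n. a' i * b' i)"
    using x by (rule ideal_prodE)
  have "(\<Sum>i<n. (a'(n := a)) i * (b'(n := b)) i) = x"
    using ab'(2) by (auto intro: sum.cong)
  then have "x + a * b = (\<Sum>i<Suc n. (a'(n := a)) i * (b'(n := b)) i)" by simp
  also have "\<dots> \<in> ideal_prod A B"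
    using ab'(1) assms(2,3) by (intro ideal_prodI) (auto simp: less_Suc_eq)
  finally show ?thesis .
qed

lemma ideal_prod_mult: "a \<in> A \<Longrightarrow> b \<in> B \<Longrightarrow> a * b \<in> ideal_prod A B"
  using ideal_prod_add_mult[OF ideal_prod_zero] by fastforce

lemma ideal_prod_add:
  assumes x: "x \<in> ideal_prod A B" and y: "y \<in> ideal_prod A B"
  shows "x + y \<in> ideal_prod A B"
proof -
  obtain n :: nat and a b where ab: "\<forall>i<n. a i \<in> A \<and> b i \<in> B" "y = (\<Sum>i<n. a i * b i)"
    using y by (rule ideal_prodE)
  have "x + (\<Sum>i<l. a i * b i) \<in> ideal_prod A B" if "l \<le> n" for l
    using that
  proof (induction l)
    case (Suc l)
    then show ?case
      using ideal_prod_add_mult[OF Suc.IH, of "a l" "b l"] ab(1) by (simp add: add.assoc)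
  qed (simp add: x)
  then show ?thesis using ab(2) by blast
qed

lemma is_ideal_ideal_prod:
  assumes B: "is_ideal B"
  shows "is_ideal (ideal_prod A B)"
  unfolding is_ideal_def
proof (intro conjI ballI allI)
  fix c x assume "x \<in> ideal_prod A B"
  then obtain n :: nat and a b where ab: "\<forall>i<n. a i \<in> A \<and> b i \<in> B" "x = (\<Sum>i<n. a i * b i)"
    by (rule ideal_prodE)
  have "c * x = (\<Sum>i<n. a i * (c * b i))"
    unfolding ab(2) by (simp add: sum_distrib_left ac_simps)
  also have "\<dots> \<in> ideal_prod A B" using ab(1) by (intro ideal_prodI ideal_mult_left[OF B]) auto
  finally show "c * x \<in> ideal_prod A B" .
next
  fix x y assume "x \<in> ideal_prod A B" "y \<in> ideal_prod A B"
  then show "x + y \<in> ideal_prod A B" by (rule ideal_prod_add)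
qed (rule ideal_prod_zero)

lemma ideal_prod_subset:
  assumes "is_ideal K" "\<And>a b. a \<in> A \<Longrightarrow> b \<in> B \<Longrightarrow> a * b \<in> K"
  shows "ideal_prod A B \<subseteq> K"
proof
  fix x assume "x \<in> ideal_prod A B"
  then obtain n :: nat and a b where ab: "\<forall>i<n. a i \<in> A \<and> b i \<in> B" "x = (\<Sum>i<n. a i * b i)"
    by (rule ideal_prodE)
  show "x \<in> K" unfolding ab(2) using ab(1) by (intro sum_mem_ideal assms) auto
qed

lemma ideal_prod_mult_right:
  assumes x: "x \<in> ideal_prod A B" and BC: "\<And>b. b \<in> B \<Longrightarrow> b * g \<in> C"
  shows "x * g \<in> ideal_prod A C"
proof -
  obtain n :: nat and a b where ab: "\<forall>i<n. a i \<in> A \<and> b i \<in> B" "x = (\<Sum>i<n. a i * b i)"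
    using x by (rule ideal_prodE)
  have "x * g = (\<Sum>i<n. a i * (b i * g))"
    unfolding ab(2) by (simp add: sum_distrib_right mult.assoc)
  also have "\<dots> \<in> ideal_prod A C" using ab(1) by (intro ideal_prodI BC) auto
  finally show ?thesis .
qed

lemma is_ideal_ideal_pow: "is_ideal (ideal_pow I n)"
  by (induction n) (auto intro: is_ideal_ideal_prod is_ideal_UNIV)

lemma ideal_pow_Suc_subset: "ideal_pow I (Suc n) \<subseteq> ideal_pow I n"
  unfolding ideal_pow.simps by (intro ideal_prod_subset is_ideal_ideal_pow ideal_mult_left)

lemma ideal_pow_antimono: "m \<le> n \<Longrightarrow> ideal_pow I n \<subseteq> ideal_pow I m"
proof (induction n)
  case (Suc n)
  then show ?case using ideal_pow_Suc_subset[of I n] by (auto simp: le_Suc_eq)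
qed simp

lemma ideal_pow_mult:
  "a \<in> ideal_pow I p \<Longrightarrow> b \<in> ideal_pow I q \<Longrightarrow> a * b \<in> ideal_pow I (p + q)"
proof (induction p arbitrary: a)
  case 0
  then show ?case using ideal_mult_left[OF is_ideal_ideal_pow] by simp
next
  case (Suc p)
  have "a \<in> ideal_prod I (ideal_pow I p)" using Suc.prems(1) by simp
  then have "a * b \<in> ideal_prod I (ideal_pow I (p + q))"
    by (rule ideal_prod_mult_right) (rule Suc.IH[OF _ Suc.prems(2)])
  then show ?case by simp
qed

lemma mem_ideal_pow_1: "y \<in> I \<Longrightarrow> y \<in> ideal_pow I 1"
  using ideal_prod_mult[of y I 1 UNIV] by simp

lemma power_mem_ideal_pow:
  assumes "y \<in> ideal_pow I 1"
  shows "y ^ n \<in> ideal_pow I n"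
proof (induction n)
  case (Suc n)
  then show ?case using ideal_pow_mult[OF assms Suc] by simp
qed simp

\<comment> \<open>otherwise simp rewrites ideal_pow I (Suc k) into an ideal product\<close>
declare ideal_pow.simps(2) [simp del]

section \<open>Units and completeness\<close>

lemma unit_elem_mult:
  assumes "unit_elem a" "unit_elem b"
  shows "unit_elem (a * b)"
proof -
  obtain u v where "a * u = 1" "b * v = 1" using assms unfolding unit_elem_def by blast
  moreover have "(a * b) * (v * u) = a * (b * v) * u" by (simp add: ac_simps)
  ultimately have "(a * b) * (v * u) = 1" by simp
  then show ?thesis unfolding unit_elem_def by blast
qed

lemma unit_elem_mult_cancel:
  assumes "unit_elem (a * b)"
  shows "unit_elem b"
proof -
  obtain u where "a * b * u = 1" using assms unfolding unit_elem_def by blast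
  then have "b * (a * u) = 1" by (simp add: ac_simps)
  then show ?thesis unfolding unit_elem_def by blast
qed

lemma unit_elem_inverse: "t * u = 1 \<Longrightarrow> unit_elem u"
  unfolding unit_elem_def by (auto simp: mult.commute)

lemma principal_ideal_unit_mult:
  assumes "unit_elem t"
  shows "principal_ideal (t * f) = principal_ideal f"
proof -
  obtain u where "t * u = 1" using assms unfolding unit_elem_def by blast
  then have "u * (t * f) = f" by (metis mult.assoc mult.commute mult_1_left)
  then have "f \<in> principal_ideal (t * f)" using principal_idealI[of u "t * f"] by simp
  moreover have "t * f \<in> principal_ideal f" by (rule principal_idealI)
  ultimately show ?thesis using principal_ideal_subset[OF is_ideal_principal_ideal] by blast
qed

lemma non_zero_divisor_unit_mult:
  assumes "unit_elem t" "non_zero_divisor f"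
  shows "non_zero_divisor (t * f)"
  unfolding non_zero_divisor_def
proof (intro allI impI)
  fix a assume "a * (t * f) = 0"
  then have "a * t = 0" using assms(2) unfolding non_zero_divisor_def by (simp add: mult.assoc)
  moreover obtain u where "t * u = 1" using assms(1) unfolding unit_elem_def by blast
  ultimately show "a = 0" by (metis mult.assoc mult_1_right mult_zero_left)
qed

lemma adically_complete_separated:
  "adically_complete I \<Longrightarrow> (\<And>n. x \<in> ideal_pow I n) \<Longrightarrow> x = 0"
  unfolding adically_complete_def by blast

lemma unit_elem_one_minus:
  assumes complete: "adically_complete I" and y: "y \<in> ideal_pow I 1"
  shows "unit_elem (1 - y)"
proof -
  define x where "x n = (\<Sum>i<n. y ^ i)" for n
  have "\<forall>n. x (Suc n) - x n \<in> ideal_pow I n"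
    using power_mem_ideal_pow[OF y] by (simp add: x_def)
  then obtain z where z: "\<And>n. z - x n \<in> ideal_pow I n"
    using complete unfolding adically_complete_def by blast
  have "(1 - y) * z - 1 \<in> ideal_pow I n" for n
  proof -
    have "(1 - y) * z - 1 = (1 - y) * (z - x n) - y ^ n"
      using one_diff_power_eq[of y n] by (simp add: x_def algebra_simps)
    then show ?thesis
      using ideal_diff[OF is_ideal_ideal_pow ideal_mult_left[OF is_ideal_ideal_pow z]
          power_mem_ideal_pow[OF y]]
      by simp
  qed
  then have "(1 - y) * z = 1" using adically_complete_separated[OF complete] by force
  then show ?thesis unfolding unit_elem_def by blast
qed

section \<open>Cancellation of a non-zero divisor against powers of I\<close>

definition artin_rees :: "'a::comm_ring_1 set \<Rightarrow> nat \<Rightarrow> 'a \<Rightarrow> bool" where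
  "artin_rees I k f \<longleftrightarrow>
     (\<forall>m. ideal_pow I (m + k) \<inter> principal_ideal f
            = ideal_prod (ideal_pow I m) (ideal_pow I k \<inter> principal_ideal f))"

definition pow_cancellable :: "'a::comm_ring_1 set \<Rightarrow> nat \<Rightarrow> 'a \<Rightarrow> bool" where
  "pow_cancellable I k f \<longleftrightarrow> (\<forall>m x. x * f \<in> ideal_pow I (m + k) \<longrightarrow> x \<in> ideal_pow I m)"

lemma pow_cancellableD:
  "pow_cancellable I k f \<Longrightarrow> x * f \<in> ideal_pow I (m + k) \<Longrightarrow> x \<in> ideal_pow I m"
  unfolding pow_cancellable_def by blast

lemma mult_mem_ideal_prod_Int_principal:
  assumes f: "non_zero_divisor f" and cf: "c * f \<in> ideal_prod A (B \<inter> principal_ideal f)"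
  shows "c \<in> ideal_prod A {d. d * f \<in> B}"
proof -
  obtain n :: nat and a b where ab: "\<forall>i<n. a i \<in> A \<and> b i \<in> B \<inter> principal_ideal f"
    "c * f = (\<Sum>i<n. a i * b i)"
    using cf by (rule ideal_prodE)
  have "\<forall>i. \<exists>d. i < n \<longrightarrow> b i = d * f"
    using ab(1) unfolding principal_ideal_def by blast
  then obtain d where d: "\<And>i. i < n \<Longrightarrow> b i = d i * f" by metis
  have "(\<Sum>i<n. a i * b i) = (\<Sum>i<n. a i * d i) * f"
    by (simp add: sum_distrib_right d mult.assoc)
  then have "(c - (\<Sum>i<n. a i * d i)) * f = 0"
    using ab(2) by (simp add: algebra_simps)
  then have "c - (\<Sum>i<n. a i * d i) = 0" using f unfolding non_zero_divisor_def by blast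
  then have "c = (\<Sum>i<n. a i * d i)" by simp
  also have "\<dots> \<in> ideal_prod A {d. d * f \<in> B}" using ab(1) d by (intro ideal_prodI) auto
  finally show ?thesis .
qed

lemma artin_rees_imp_pow_cancellable:
  assumes f: "non_zero_divisor f" and AR: "artin_rees I k f"
  shows "pow_cancellable I k f"
  unfolding pow_cancellable_def
proof (intro allI impI)
  fix m x assume "x * f \<in> ideal_pow I (m + k)"
  then have "x * f \<in> ideal_prod (ideal_pow I m) (ideal_pow I k \<inter> principal_ideal f)"
    using AR principal_idealI[of x f] unfolding artin_rees_def by blast
  then have "x \<in> ideal_prod (ideal_pow I m) {d. d * f \<in> ideal_pow I k}"
    by (rule mult_mem_ideal_prod_Int_principal[OF f])
  moreover have "ideal_prod (ideal_pow I m) {d. d * f \<in> ideal_pow I k} \<subseteq> ideal_pow I m"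
    by (intro ideal_prod_subset is_ideal_ideal_pow ideal_mult_right)
  ultimately show "x \<in> ideal_pow I m" by blast
qed

lemma pow_cancellable_congruent:
  assumes f: "pow_cancellable I k f" and gf: "g - f \<in> ideal_pow I (Suc k)"
  shows "pow_cancellable I k g"
  unfolding pow_cancellable_def
proof (rule allI)
  fix m show "\<forall>x. x * g \<in> ideal_pow I (m + k) \<longrightarrow> x \<in> ideal_pow I m"
  proof (induction m)
    case (Suc m)
    show ?case
    proof (intro allI impI)
      fix x assume xg: "x * g \<in> ideal_pow I (Suc m + k)"
      then have "x \<in> ideal_pow I m"
        using Suc.IH ideal_pow_antimono[of "m + k" "Suc m + k" I] by auto
      then have "x * (g - f) \<in> ideal_pow I (Suc m + k)"
        using ideal_pow_mult[OF _ gf] by fastforce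
      then have "x * g - x * (g - f) \<in> ideal_pow I (Suc m + k)"
        using ideal_diff[OF is_ideal_ideal_pow xg] by blast
      then have "x * f \<in> ideal_pow I (Suc m + k)" by (simp add: algebra_simps)
      then show "x \<in> ideal_pow I (Suc m)" by (rule pow_cancellableD[OF f])
    qed
  qed simp
qed

lemma pow_cancellable_imp_non_zero_divisor:
  assumes complete: "adically_complete I" and g: "pow_cancellable I k g"
  shows "non_zero_divisor g"
  unfolding non_zero_divisor_def
proof (intro allI impI)
  fix a assume "a * g = 0"
  then have "a \<in> ideal_pow I m" for m
    using pow_cancellableD[OF g] ideal_zero[OF is_ideal_ideal_pow] by metis
  then show "a = 0" by (rule adically_complete_separated[OF complete])
qed

lemma principal_ideal_adically_closed:
  assumes complete: "adically_complete I" and g: "pow_cancellable I k g"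
    and j: "\<And>n. j \<in> ideal_sum (principal_ideal g) (ideal_pow I n)"
  shows "j \<in> principal_ideal g"
proof -
  have "\<forall>n. \<exists>c. j - c * g \<in> ideal_pow I n"
    using j mem_ideal_sum_principal_iff[OF is_ideal_ideal_pow] by blast
  then obtain c where c: "\<And>n. j - c n * g \<in> ideal_pow I n" by metis
  define x where "x n = c (n + k)" for n
  have "x (Suc n) - x n \<in> ideal_pow I n" for n
  proof -
    have "(x (Suc n) - x n) * g = (j - c (n + k) * g) - (j - c (Suc n + k) * g)"
      unfolding x_def by (simp add: algebra_simps)
    also have "\<dots> \<in> ideal_pow I (n + k)"
    proof (rule ideal_diff[OF is_ideal_ideal_pow c])
      show "j - c (Suc n + k) * g \<in> ideal_pow I (n + k)"
        using c[of "Suc n + k"] ideal_pow_antimono[of "n + k" "Suc n + k" I] by auto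
    qed
    finally show ?thesis by (rule pow_cancellableD[OF g])
  qed
  then obtain y where y: "\<And>n. y - x n \<in> ideal_pow I n"
    using complete unfolding adically_complete_def by blast
  have "j - y * g \<in> ideal_pow I n" for n
  proof -
    have "j - y * g = (j - c (n + k) * g) - (y - x n) * g"
      unfolding x_def by (simp add: algebra_simps)
    also have "\<dots> \<in> ideal_pow I n"
    proof (rule ideal_diff[OF is_ideal_ideal_pow _ ideal_mult_right[OF is_ideal_ideal_pow y]])
      show "j - c (n + k) * g \<in> ideal_pow I n"
        using c[of "n + k"] ideal_pow_antimono[of n "n + k" I] by auto
    qed
    finally show ?thesis .
  qed
  then have "j = y * g" using adically_complete_separated[OF complete] by force
  then show ?thesis using principal_idealI by simp
qed

section \<open>Generators modulo powers of I\<close>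

lemma ideal_sum_principal_eq_imp_unit_multiple:
  assumes complete: "adically_complete I" and f: "pow_cancellable I k f" and m: "m \<ge> 1"
    and eq: "ideal_sum (principal_ideal h) (ideal_pow I (m + k))
               = ideal_sum (principal_ideal f) (ideal_pow I (m + k))"
  shows "\<exists>t. unit_elem t \<and> h - t * f \<in> ideal_pow I (m + k)"
proof -
  note L = is_ideal_ideal_pow[of I "m + k"]
  have "h \<in> ideal_sum (principal_ideal f) (ideal_pow I (m + k))"
    using self_mem_ideal_sum_principal[OF L, of h] eq by simp
  then obtain a where a: "h - a * f \<in> ideal_pow I (m + k)"
    using mem_ideal_sum_principal_iff[OF L] by blast
  have "f \<in> ideal_sum (principal_ideal h) (ideal_pow I (m + k))"
    using self_mem_ideal_sum_principal[OF L, of f] eq by simp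
  then obtain b where b: "f - b * h \<in> ideal_pow I (m + k)"
    using mem_ideal_sum_principal_iff[OF L] by blast
  have "(1 - b * a) * f = (f - b * h) + b * (h - a * f)" by (simp add: algebra_simps)
  also have "\<dots> \<in> ideal_pow I (m + k)" using a b by (intro ideal_add[OF L] ideal_mult_left[OF L])
  finally have "1 - b * a \<in> ideal_pow I m" by (rule pow_cancellableD[OF f])
  then have "1 - b * a \<in> ideal_pow I 1" using ideal_pow_antimono[OF m] by blast
  then have "unit_elem (b * a)" using unit_elem_one_minus[OF complete] by fastforce
  then show ?thesis using a unit_elem_mult_cancel by blast
qed

lemma unit_multiples_congruent:
  assumes L: "is_ideal L"
    and t: "unit_elem t" "h - t * f \<in> L" and t': "unit_elem t'" "h' - t' * f \<in> L"
  shows "\<exists>v. unit_elem v \<and> h' - v * h \<in> L"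
proof -
  obtain u where u: "t * u = 1" using t(1) unfolding unit_elem_def by blast
  have "h' - (t' * u) * h = (h' - t' * f) - (t' * u) * (h - t * f)"
    using u by (simp add: algebra_simps)
  also have "\<dots> \<in> L" by (rule ideal_diff[OF L t'(2) ideal_mult_left[OF L t(2)]])
  finally show ?thesis using unit_elem_mult[OF t'(1) unit_elem_inverse[OF u]] by blast
qed

lemma ideal_prod_pow_Int_subset:
  assumes B: "is_ideal B"
  shows "ideal_prod (ideal_pow I m) (ideal_pow I k \<inter> B) \<subseteq> ideal_pow I (m + k) \<inter> B"
proof (rule ideal_prod_subset[OF is_ideal_Int[OF is_ideal_ideal_pow B]])
  fix a b assume "a \<in> ideal_pow I m" "b \<in> ideal_pow I k \<inter> B"
  then show "a * b \<in> ideal_pow I (m + k) \<inter> B" using ideal_pow_mult ideal_mult_left[OF B] by blast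
qed

lemma artin_rees_congruent:
  assumes f: "non_zero_divisor f" and AR: "artin_rees I k f"
    and gf: "g - f \<in> ideal_pow I (Suc k)"
  shows "artin_rees I k g"
  unfolding artin_rees_def
proof (intro allI equalityI subsetI)
  fix m y assume y: "y \<in> ideal_pow I (m + k) \<inter> principal_ideal g"
  then obtain c where c: "y = c * g" by (auto elim: principal_idealE)
  show "y \<in> ideal_prod (ideal_pow I m) (ideal_pow I k \<inter> principal_ideal g)"
  proof (cases m)
    case 0
    then show ?thesis using ideal_prod_mult[of 1 UNIV y] y by simp
  next
    case (Suc m')
    have g: "pow_cancellable I k g"
      by (rule pow_cancellable_congruent[OF artin_rees_imp_pow_cancellable[OF f AR] gf])
    have "c \<in> ideal_pow I m'"
      using y c Suc ideal_pow_antimono[of "m' + k" "m + k" I] by (auto intro: pow_cancellableD[OF g])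
    then have "c * (g - f) \<in> ideal_pow I (m + k)"
      using ideal_pow_mult[OF _ gf] Suc by fastforce
    then have "c * f \<in> ideal_pow I (m + k)"
      using ideal_diff[OF is_ideal_ideal_pow, of "c * g"] y c by (fastforce simp: algebra_simps)
    then have "c * f \<in> ideal_prod (ideal_pow I m) (ideal_pow I k \<inter> principal_ideal f)"
      using AR principal_idealI[of c f] unfolding artin_rees_def by blast
    then have "c \<in> ideal_prod (ideal_pow I m) {d. d * f \<in> ideal_pow I k}"
      by (rule mult_mem_ideal_prod_Int_principal[OF f])
    moreover have "d * g \<in> ideal_pow I k \<inter> principal_ideal g"
      if "d \<in> {d. d * f \<in> ideal_pow I k}" for d
    proof -
      have "d * (g - f) \<in> ideal_pow I k"
        using ideal_mult_left[OF is_ideal_ideal_pow gf] ideal_pow_Suc_subset by blast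
      then have "d * f + d * (g - f) \<in> ideal_pow I k"
        using that by (intro ideal_add is_ideal_ideal_pow) simp_all
      then show ?thesis using principal_idealI by (simp add: algebra_simps)
    qed
    ultimately show ?thesis unfolding c by (rule ideal_prod_mult_right)
  qed
next
  fix m y assume "y \<in> ideal_prod (ideal_pow I m) (ideal_pow I k \<inter> principal_ideal g)"
  then show "y \<in> ideal_pow I (m + k) \<inter> principal_ideal g"
    using ideal_prod_pow_Int_subset[OF is_ideal_principal_ideal] by blast
qed

lemma artin_rees_of_generator_mod_pow:
  assumes complete: "adically_complete I" and f: "non_zero_divisor f" and AR: "artin_rees I k f"
    and eq: "ideal_sum (principal_ideal g) (ideal_pow I (Suc k))
               = ideal_sum (principal_ideal f) (ideal_pow I (Suc k))"
  shows "artin_rees I k g"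
proof -
  have "ideal_sum (principal_ideal g) (ideal_pow I (1 + k))
          = ideal_sum (principal_ideal f) (ideal_pow I (1 + k))"
    using eq by simp
  then obtain t where "unit_elem t" "g - t * f \<in> ideal_pow I (1 + k)"
    using ideal_sum_principal_eq_imp_unit_multiple[OF complete artin_rees_imp_pow_cancellable[OF f AR]
        order_refl]
    by blast
  then have t: "unit_elem t" "g - t * f \<in> ideal_pow I (Suc k)" by simp_all
  have "artin_rees I k (t * f)"
    using AR unfolding artin_rees_def principal_ideal_unit_mult[OF t(1)] .
  then show ?thesis using t non_zero_divisor_unit_mult[OF t(1) f] by (blast intro: artin_rees_congruent)
qed

section \<open>Cartier divisors\<close>

lemma foldr_cl_add_fst_mem:
  assumes J: "is_ideal J" and L: "\<forall>x\<in>set L. fst (x n) \<in> J"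
  shows "fst (foldr (cl_add s) L cl_zero n) \<in> J"
  using L
  by (induction L) (simp_all add: cl_zero_def cl_add_def loc_add_def ideal_zero ideal_add ideal_mult_left J)

lemma locally_principal_nzd_mod_pow:
  assumes J: "is_ideal J" and lp: "locally_principal_nzd I s J"
  shows "\<exists>p P \<alpha> \<beta>. P \<in> J \<and> s ^ \<alpha> * p - s ^ \<beta> * P \<in> ideal_pow I N \<and>
           (\<forall>j\<in>J. \<exists>\<gamma> c. s ^ \<gamma> * j - c * p \<in> ideal_pow I N)"
proof -
  obtain \<phi> m c js where gen: "\<forall>j\<in>J. \<exists>c. cl_elem I s c \<and> cl_eq I s (cl_of j) (cl_mul c \<phi>)"
    and js: "\<forall>i<m. js i \<in> J"
    and \<phi>: "cl_eq I s \<phi> (foldr (cl_add s) (map (\<lambda>i. cl_mul (c i) (cl_of (js i))) [0..<m]) cl_zero)"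
    using lp unfolding locally_principal_nzd_def by blast
  define F where "F = foldr (cl_add s) (map (\<lambda>i. cl_mul (c i) (cl_of (js i))) [0..<m]) cl_zero"
  have P: "fst (F N) \<in> J"
    unfolding F_def using js
    by (intro foldr_cl_add_fst_mem[OF J]) (auto simp: cl_mul_def cl_of_def loc_mul_def ideal_mult_left J)
  obtain r where "s ^ r * (s ^ snd (F N) * fst (\<phi> N) - s ^ snd (\<phi> N) * fst (F N)) \<in> ideal_pow I N"
    using \<phi> unfolding F_def[symmetric] cl_eq_def loc_eq_def by blast
  then have p: "s ^ (r + snd (F N)) * fst (\<phi> N) - s ^ (r + snd (\<phi> N)) * fst (F N) \<in> ideal_pow I N"
    by (simp add: power_add right_diff_distrib mult.assoc)
  have "\<exists>\<gamma> e. s ^ \<gamma> * j - e * fst (\<phi> N) \<in> ideal_pow I N" if j: "j \<in> J" for j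
  proof -
    obtain e where "cl_eq I s (cl_of j) (cl_mul e \<phi>)" using gen j by blast
    then obtain r where
      "s ^ r * (s ^ (snd (e N) + snd (\<phi> N)) * j - fst (e N) * fst (\<phi> N)) \<in> ideal_pow I N"
      unfolding cl_eq_def loc_eq_def cl_of_def cl_mul_def loc_mul_def by auto
    then have "s ^ (r + (snd (e N) + snd (\<phi> N))) * j - (s ^ r * fst (e N)) * fst (\<phi> N)
                 \<in> ideal_pow I N"
      by (simp add: power_add right_diff_distrib mult.assoc)
    then show ?thesis by blast
  qed
  then show ?thesis using P p by blast
qed

lemma power_mult_mem_if_diff_mult_mem:
  assumes L: "is_ideal L" "ideal_pow I N \<subseteq> L"
    and d: "d \<in> ideal_pow I 1" and x: "(u - d) * x \<in> L"
  shows "u ^ N * x \<in> L"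
proof -
  obtain Q where Q: "u ^ N - d ^ N = (u - d) * Q"
    using power_diff_sumr2 by blast
  have "u ^ N * x = (u ^ N - d ^ N) * x + d ^ N * x" by (simp add: algebra_simps)
  also have "\<dots> = Q * ((u - d) * x) + d ^ N * x" unfolding Q by (simp add: ac_simps)
  also have "\<dots> \<in> L"
    using power_mem_ideal_pow[OF d, of N] L x
    by (blast intro: ideal_add ideal_mult_left ideal_mult_right)
  finally show ?thesis .
qed

lemma power_mult_mem_principal_mod_pow:
  assumes g: "pow_cancellable I k g" and N: "Suc k \<le> N"
    and P: "P - a * g \<in> ideal_pow I (Suc k)"
    and p: "s ^ \<alpha> * p - s ^ \<beta> * P \<in> ideal_pow I N"
    and gp: "s ^ \<gamma> * g - c * p \<in> ideal_pow I N"
    and jp: "s ^ \<delta> * j - e * p \<in> ideal_pow I N"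
  shows "\<exists>\<rho>. s ^ \<rho> * j \<in> ideal_sum (principal_ideal g) (ideal_pow I N)"
proof -
  note IN = is_ideal_ideal_pow[of I N]
  define L where "L = ideal_sum (principal_ideal g) (ideal_pow I N)"
  have L: "is_ideal L" "ideal_pow I N \<subseteq> L"
    unfolding L_def using ideal_sumI[OF ideal_zero[OF is_ideal_principal_ideal]]
    by (auto intro: is_ideal_ideal_sum is_ideal_principal_ideal IN)
  define u where "u = s ^ \<alpha> * s ^ \<gamma>"
  define d where "d = u - c * s ^ \<beta> * a"
  have "u * g - c * s ^ \<beta> * P = s ^ \<alpha> * (s ^ \<gamma> * g - c * p) + c * (s ^ \<alpha> * p - s ^ \<beta> * P)"
    unfolding u_def by (simp add: algebra_simps)
  also have "\<dots> \<in> ideal_pow I N" using p gp by (intro ideal_add[OF IN] ideal_mult_left[OF IN])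
  finally have "u * g - c * s ^ \<beta> * P \<in> ideal_pow I (Suc k)"
    using ideal_pow_antimono[OF N] by blast
  then have "(u * g - c * s ^ \<beta> * P) + (c * s ^ \<beta>) * (P - a * g) \<in> ideal_pow I (Suc k)"
    by (rule ideal_add[OF is_ideal_ideal_pow _ ideal_mult_left[OF is_ideal_ideal_pow P]])
  then have "d * g \<in> ideal_pow I (1 + k)" unfolding d_def by (simp add: algebra_simps)
  then have d: "d \<in> ideal_pow I 1" by (rule pow_cancellableD[OF g])
  \<comment> \<open>eliminate p between the representations of g and j\<close>
  have "(u - d) * (s ^ \<delta> * j) - (a * s ^ \<beta> * e * s ^ \<gamma>) * g
          = a * s ^ \<beta> * (c * (s ^ \<delta> * j - e * p) - e * (s ^ \<gamma> * g - c * p))"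
    unfolding d_def by (simp add: algebra_simps)
  also have "\<dots> \<in> ideal_pow I N"
    by (rule ideal_mult_left[OF IN ideal_diff[OF IN ideal_mult_left[OF IN jp] ideal_mult_left[OF IN gp]]])
  finally have "(u - d) * (s ^ \<delta> * j) \<in> L"
    unfolding L_def mem_ideal_sum_principal_iff[OF IN] by blast
  then have "u ^ N * (s ^ \<delta> * j) \<in> L" by (rule power_mult_mem_if_diff_mult_mem[OF L d])
  then have "s ^ ((\<alpha> + \<gamma>) * N + \<delta>) * j \<in> L"
    unfolding u_def by (simp add: power_add power_mult power_mult_distrib mult.assoc)
  then show ?thesis unfolding L_def by blast
qed

lemma locally_principal_subset_principal_mod_pow:
  assumes J: "is_ideal J" and cov: "ideal_sum (ideal_gen S) I = UNIV"
    and lp: "\<forall>s\<in>S. locally_principal_nzd I s J"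
    and g: "pow_cancellable I k g" "g \<in> J"
    and J_mod: "\<And>j. j \<in> J \<Longrightarrow> \<exists>a. j - a * g \<in> ideal_pow I (Suc k)"
  shows "J \<subseteq> ideal_sum (principal_ideal g) (ideal_pow I n)"
proof
  fix j assume j: "j \<in> J"
  define L where "L = ideal_sum (principal_ideal g) (ideal_pow I n)"
  define R where "R = {x. \<exists>e. x ^ e * j \<in> L}"
  have "is_ideal L"
    unfolding L_def by (intro is_ideal_ideal_sum is_ideal_principal_ideal is_ideal_ideal_pow)
  then have R: "is_ideal R"
    unfolding R_def using is_ideal_radical[OF is_ideal_colon, of L j] by simp
  have "s \<in> R" if s: "s \<in> S" for s
  proof -
    define N where "N = n + Suc k"
    have "locally_principal_nzd I s J" using lp s by blast
    then obtain p P \<alpha> \<beta> where P: "P \<in> J" and p: "s ^ \<alpha> * p - s ^ \<beta> * P \<in> ideal_pow I N"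
      and gen: "\<forall>j\<in>J. \<exists>\<gamma> c. s ^ \<gamma> * j - c * p \<in> ideal_pow I N"
      using locally_principal_nzd_mod_pow[OF J, where N = N] by blast
    obtain a where aP: "P - a * g \<in> ideal_pow I (Suc k)" using J_mod P by blast
    obtain \<gamma> c where gp: "s ^ \<gamma> * g - c * p \<in> ideal_pow I N" using gen g(2) by blast
    obtain \<delta> e where jp: "s ^ \<delta> * j - e * p \<in> ideal_pow I N" using gen j by blast
    have N: "Suc k \<le> N" "n \<le> N" by (simp_all add: N_def)
    obtain \<rho> where "s ^ \<rho> * j \<in> ideal_sum (principal_ideal g) (ideal_pow I N)"
      using power_mult_mem_principal_mod_pow[OF g(1) N(1) aP p gp jp] by blast
    then have "s ^ \<rho> * j \<in> L"
      unfolding L_def using ideal_sum_mono[OF ideal_pow_antimono[OF N(2)]] by blast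
    then show ?thesis unfolding R_def by blast
  qed
  moreover have "x \<in> R" if x: "x \<in> I" for x
  proof -
    have "x ^ n * j \<in> ideal_pow I n"
      using x by (intro ideal_mult_right is_ideal_ideal_pow power_mem_ideal_pow mem_ideal_pow_1)
    then show ?thesis
      unfolding R_def L_def using ideal_sumI[OF ideal_zero[OF is_ideal_principal_ideal]] by fastforce
  qed
  ultimately have "ideal_sum (ideal_gen S) I \<subseteq> R"
    by (intro ideal_sum_subset ideal_gen_subset R) auto
  then have "1 \<in> R" using cov by blast
  then show "j \<in> L" unfolding R_def by simp
qed

lemma cartier_divisor_principal:
  assumes complete: "adically_complete I" and f: "pow_cancellable I k f"
    and J: "cartier_divisor I J"
    and eq: "ideal_sum J (ideal_pow I (Suc k)) = ideal_sum (principal_ideal f) (ideal_pow I (Suc k))"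
  shows "\<exists>g. non_zero_divisor g \<and> J = principal_ideal g"
proof -
  note IK = is_ideal_ideal_pow[of I "Suc k"]
  obtain S where J_ideal: "is_ideal J" and cov: "ideal_sum (ideal_gen S) I = UNIV"
    and lp: "\<forall>s\<in>S. locally_principal_nzd I s J"
    using J unfolding cartier_divisor_def by blast
  have "f \<in> ideal_sum J (ideal_pow I (Suc k))"
    using eq self_mem_ideal_sum_principal[OF IK, of f] by simp
  then obtain g \<epsilon> where f_eq: "f = g + \<epsilon>" and g: "g \<in> J" and \<epsilon>: "\<epsilon> \<in> ideal_pow I (Suc k)"
    by (rule ideal_sumE)
  have "g - f \<in> ideal_pow I (Suc k)" using ideal_diff[OF IK ideal_zero[OF IK] \<epsilon>] f_eq by simp
  then have g_cancel: "pow_cancellable I k g" by (rule pow_cancellable_congruent[OF f])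
  have J_mod: "\<exists>a. j - a * g \<in> ideal_pow I (Suc k)" if "j \<in> J" for j
  proof -
    have "j \<in> ideal_sum (principal_ideal f) (ideal_pow I (Suc k))"
      using eq ideal_sumI[OF that ideal_zero[OF IK]] by auto
    then obtain a where "j - a * f \<in> ideal_pow I (Suc k)"
      using mem_ideal_sum_principal_iff[OF IK] by blast
    then have "(j - a * f) + a * \<epsilon> \<in> ideal_pow I (Suc k)"
      using \<epsilon> by (intro ideal_add[OF IK] ideal_mult_left[OF IK])
    then have "j - a * g \<in> ideal_pow I (Suc k)" unfolding f_eq by (simp add: algebra_simps)
    then show ?thesis by blast
  qed
  have "J \<subseteq> principal_ideal g"
  proof
    fix j assume "j \<in> J"
    then have "j \<in> ideal_sum (principal_ideal g) (ideal_pow I n)" for n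
      using locally_principal_subset_principal_mod_pow[OF J_ideal cov lp g_cancel g J_mod] by blast
    then show "j \<in> principal_ideal g" by (rule principal_ideal_adically_closed[OF complete g_cancel])
  qed
  then have "J = principal_ideal g" using principal_ideal_subset[OF J_ideal g] by blast
  then show ?thesis using pow_cancellable_imp_non_zero_divisor[OF complete g_cancel] by blast
qed

theorem lemma4p3:
  fixes I :: "'a::comm_ring_1 set" and f :: 'a and k :: nat
  assumes noeth: "noetherian_ring TYPE('a)"
    and I_ideal: "is_ideal I"
    and complete: "adically_complete I"
    and f_nzd: "non_zero_divisor f"
    and k_pos: "k \<ge> 1"
    and AR: "\<forall>m. ideal_pow I (m + k) \<inter> principal_ideal f
                 = ideal_prod (ideal_pow I m) (ideal_pow I k \<inter> principal_ideal f)"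
  shows
    "(\<forall>m h. m \<ge> 1 \<longrightarrow>
        ideal_sum (principal_ideal h) (ideal_pow I (m + k))
          = ideal_sum (principal_ideal f) (ideal_pow I (m + k)) \<longrightarrow>
        (\<exists>t. unit_elem t \<and> h - t * f \<in> ideal_pow I (m + k)))
   \<and> (\<forall>m h h'. m \<ge> 1 \<longrightarrow>
        ideal_sum (principal_ideal h) (ideal_pow I (m + k))
          = ideal_sum (principal_ideal f) (ideal_pow I (m + k)) \<longrightarrow>
        ideal_sum (principal_ideal h') (ideal_pow I (m + k))
          = ideal_sum (principal_ideal f) (ideal_pow I (m + k)) \<longrightarrow>
        (\<exists>v. unit_elem v \<and> h' - v * h \<in> ideal_pow I (m + k)))
   \<and> (\<forall>g. non_zero_divisor g \<longrightarrow>
        ideal_sum (principal_ideal g) (ideal_pow I (k + 1))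
          = ideal_sum (principal_ideal f) (ideal_pow I (k + 1)) \<longrightarrow>
        (\<forall>m. ideal_pow I (m + k) \<inter> principal_ideal g
               = ideal_prod (ideal_pow I m) (ideal_pow I k \<inter> principal_ideal g)))
   \<and> (\<forall>J. cartier_divisor I J \<longrightarrow>
        ideal_sum J (ideal_pow I (k + 1))
          = ideal_sum (principal_ideal f) (ideal_pow I (k + 1)) \<longrightarrow>
        (\<exists>g. non_zero_divisor g \<and> J = principal_ideal g))"
proof -
  have f_AR: "artin_rees I k f" using AR unfolding artin_rees_def .
  have f_cancel: "pow_cancellable I k f" by (rule artin_rees_imp_pow_cancellable[OF f_nzd f_AR])
  note lift = ideal_sum_principal_eq_imp_unit_multiple[OF complete f_cancel]
  show ?thesis
  proof (intro conjI allI impI)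
    fix m h assume "1 \<le> m" "ideal_sum (principal_ideal h) (ideal_pow I (m + k))
                                = ideal_sum (principal_ideal f) (ideal_pow I (m + k))"
    then show "\<exists>t. unit_elem t \<and> h - t * f \<in> ideal_pow I (m + k)" by (rule lift)
  next
    fix m h h' assume m: "1 \<le> m"
      and "ideal_sum (principal_ideal h) (ideal_pow I (m + k))
             = ideal_sum (principal_ideal f) (ideal_pow I (m + k))"
      and "ideal_sum (principal_ideal h') (ideal_pow I (m + k))
             = ideal_sum (principal_ideal f) (ideal_pow I (m + k))"
    then show "\<exists>v. unit_elem v \<and> h' - v * h \<in> ideal_pow I (m + k)"
      using lift[OF m] unit_multiples_congruent[OF is_ideal_ideal_pow] by metis
  next
    fix g m assume "ideal_sum (principal_ideal g) (ideal_pow I (k + 1))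
                      = ideal_sum (principal_ideal f) (ideal_pow I (k + 1))"
    then have "artin_rees I k g"
      using artin_rees_of_generator_mod_pow[OF complete f_nzd f_AR] by simp
    then show "ideal_pow I (m + k) \<inter> principal_ideal g
                 = ideal_prod (ideal_pow I m) (ideal_pow I k \<inter> principal_ideal g)"
      unfolding artin_rees_def by blast
  next
    fix J assume "cartier_divisor I J" "ideal_sum J (ideal_pow I (k + 1))
                                         = ideal_sum (principal_ideal f) (ideal_pow I (k + 1))"
    then show "\<exists>g. non_zero_divisor g \<and> J = principal_ideal g"
      using cartier_divisor_principal[OF complete f_cancel] by simp
  qed
qed

end
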